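(* Suppose that $k\geq2$ is an integer, that $q_1,\ldots,q_k$ are positive integers, and that for each $1\leq i\leq k$, $C_i$ and $D_i$ are integers satisfying $D_i-C_i\geq\max_{1\leq j\leq k}q_j$. Let $r=\gcd(q_1,\ldots,q_k)$, \[\mathcal{A}=\Big\{\sum_{i=1}^k a_iq_i \;:\; a_i\in\mathbb{Z},\ C_i\leq a_i\leq D_i\Big\},\qquad C=\sum_{i=1}^kC_iq_i,\qquad D=\sum_{i=1}^kD_iq_i .\] Then \[\mathcal{A}\subset\Big\{mr \;:\; m\in\mathbb{Z},\ \frac{C}{r}\leq m\leq\frac{D}{r}\Big\}\] and \[\Big\{mr \;:\; m\in\mathbb{Z},\ \frac{C}{r}+\frac1{r^2}\sum_{i=1}^{k-1}q_iq_{i+1}\leq m\leq\frac{D}{r}-\frac1{r^2}\sum_{i=1}^{k-1}q_iq_{i+1}\Big\}\subset\mathcal{A}.\] *)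

theory Defs
  imports Complex_Main
begin

end

theory Submission
  imports Defs
begin

text \<open>
  Write g_j = gcd(q_1, ..., q_j) and L_i = D_i - C_i. By induction on j, every multiple z of
  g_j with m_j <= z <= (SUM i<=j. L_i q_i) - m_j is a sum (SUM i<=j. b_i q_i) with 0 <= b_i <= L_i,
  where the margins are m_1 = 0 and m_(j+1) = m_j + (p_j - 1) q_(j+1) with p_j = g_j / g_(j+1).
  In the step, the coefficients c with g_j | z - c q_(j+1) form a residue class modulo p_j, so
  any p_j consecutive integers contain one; since L_i >= max q, the interval allowed for the
  remainder z - c q_(j+1) is long enough to host such a window. Finally m_k g_k <= SUM q_i q_(i+1),
  which turns the margin into the slack S / r^2 of the statement after dividing by r = g_k.
\<close>

lemma div_gcd_ge_1:
  fixes a b :: int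
  assumes "a > 0"
  shows "a div gcd a b \<ge> 1"
proof -
  have "gcd a b dvd a" "gcd a b > 0" using assms by auto
  then have "a = (a div gcd a b) * gcd a b" by simp
  then show ?thesis using assms \<open>gcd a b > 0\<close> by (metis int_one_le_iff_zero_less zero_less_mult_pos2)
qed

lemma div_gcd_le:
  fixes a b :: int
  assumes "a > 0"
  shows "a div gcd a b \<le> a"
proof -
  have "gcd a b \<ge> 1" using assms by (simp add: int_one_le_iff_zero_less)
  then have "a div gcd a b * 1 \<le> a div gcd a b * gcd a b"
    using div_gcd_ge_1[OF assms, of b] by (intro mult_left_mono) auto
  then show ?thesis by simp
qed

lemma dvd_div_gcd_mult:
  fixes a b :: int
  shows "a dvd (a div gcd a b) * b"
proof -
  have "(a div gcd a b) * b = a * (b div gcd a b)"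
    by (metis dvd_div_mult gcd_dvd1 gcd_dvd2 mult.commute)
  then show ?thesis by simp
qed

lemma exists_dvd_diff_in_window:
  fixes a b z U :: int
  assumes "a > 0" and "gcd a b dvd z"
  shows "\<exists>c \<in> {U - a div gcd a b + 1..U}. a dvd z - c * b"
proof -
  define p where "p = a div gcd a b"
  obtain u v where uv: "u * a + v * b = gcd a b" using bezout_int by blast
  obtain w where w: "z = gcd a b * w" using assms(2) by blast
  have c0: "a dvd z - (v * w) * b"
  proof -
    have "z - (v * w) * b = (u * w) * a" unfolding w uv[symmetric] by (simp add: algebra_simps)
    then show ?thesis by simp
  qed
  define c where "c = U - (U - v * w) mod p"
  have "c - v * w = p * ((U - v * w) div p)"
    unfolding c_def by (simp add: minus_mod_eq_mult_div[symmetric])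
  then have "z - c * b = (z - (v * w) * b) - ((U - v * w) div p) * (p * b)"
    by (simp add: algebra_simps)
  moreover have "a dvd p * b" unfolding p_def by (rule dvd_div_gcd_mult)
  ultimately have "a dvd z - c * b" using c0 by (metis dvd_diff dvd_mult)
  moreover have "p > 0" using div_gcd_ge_1[OF assms(1), of b] unfolding p_def by simp
  then have "0 \<le> (U - v * w) mod p" "(U - v * w) mod p < p" by simp_all
  then have "c \<in> {U - p + 1..U}" unfolding c_def by simp
  ultimately show ?thesis unfolding p_def by blast
qed

lemma exists_admissible_coefficient:
  fixes a b z l T L :: int
  defines "p \<equiv> a div gcd a b"
  assumes "a > 0" "b > 0" "gcd a b dvd z"
    and gap: "p * b \<le> T - 2 * l" and "p - 1 \<le> L"
    and z_lo: "l + (p - 1) * b \<le> z" and z_hi: "z \<le> T + L * b - l - (p - 1) * b"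
  shows "\<exists>c. 0 \<le> c \<and> c \<le> L \<and> a dvd z - c * b \<and> l \<le> z - c * b \<and> z - c * b \<le> T - l"
proof -
  \<comment> \<open>\<open>c \<le> (z - l) div b\<close> keeps the remainder \<open>\<ge> l\<close>; the gap \<open>p b\<close> keeps it \<open>\<le> T - l\<close>.\<close>
  define U where "U = min L ((z - l) div b)"
  obtain c where c: "U - p + 1 \<le> c" "c \<le> U" "a dvd z - c * b"
    using exists_dvd_diff_in_window[OF assms(2,4), of U] unfolding p_def by auto
  have "(p - 1) * b div b \<le> (z - l) div b"
    using z_lo \<open>b > 0\<close> by (intro zdiv_mono1) auto
  then have "p - 1 \<le> U" unfolding U_def using \<open>b > 0\<close> \<open>p - 1 \<le> L\<close> by simp
  then have "0 \<le> c" using c by linarith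
  have "c * b \<le> (z - l) div b * b"
    using c \<open>b > 0\<close> unfolding U_def by (intro mult_right_mono) auto
  also have "\<dots> \<le> z - l" by (simp add: minus_mod_eq_div_mult[symmetric] \<open>b > 0\<close>)
  finally have "l \<le> z - c * b" by linarith
  moreover have "z - c * b \<le> T - l"
  proof (cases "L \<le> (z - l) div b")
    case True
    then have "(L - p + 1) * b \<le> c * b"
      using c \<open>b > 0\<close> unfolding U_def by (intro mult_right_mono) auto
    then show ?thesis using z_hi by (simp add: algebra_simps)
  next
    case False
    then have "((z - l) div b - p + 1) * b \<le> c * b"
      using c \<open>b > 0\<close> unfolding U_def by (intro mult_right_mono) auto
    moreover have "z - l < ((z - l) div b + 1) * b"
      using pos_mod_bound[OF \<open>b > 0\<close>, of "z - l"]
      by (simp add: distrib_right minus_mod_eq_div_mult[symmetric])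
    ultimately show ?thesis using gap by (simp add: algebra_simps)
  qed
  ultimately show ?thesis using c \<open>0 \<le> c\<close> unfolding U_def by auto
qed

definition prefix_gcd :: "(nat \<Rightarrow> int) \<Rightarrow> nat \<Rightarrow> int" where
  "prefix_gcd q j = Gcd (q ` {1..j})"

fun margin :: "(nat \<Rightarrow> int) \<Rightarrow> nat \<Rightarrow> int" where
  "margin q 0 = 0"
| "margin q (Suc j) = (if j = 0 then 0
     else margin q j + (prefix_gcd q j div gcd (prefix_gcd q j) (q (Suc j)) - 1) * q (Suc j))"

lemma prefix_gcd_Suc: "prefix_gcd q (Suc j) = gcd (prefix_gcd q j) (q (Suc j))"
  unfolding prefix_gcd_def by (simp add: atLeastAtMostSuc_conv Gcd_insert gcd.commute)

lemma prefix_gcd_dvd: "i \<in> {1..j} \<Longrightarrow> prefix_gcd q j dvd q i"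
  unfolding prefix_gcd_def by simp

lemma prefix_gcd_pos:
  assumes "q 1 > 0" "1 \<le> j"
  shows "prefix_gcd q j > 0"
proof -
  have "q 1 \<in> q ` {1..j}" using assms(2) by simp
  then have "prefix_gcd q j \<noteq> 0" using assms(1) unfolding prefix_gcd_def by (auto simp: Gcd_0_iff)
  then show ?thesis unfolding prefix_gcd_def by (simp add: order_le_neq_trans)
qed

lemma prefix_gcd_le: "q 1 > 0 \<Longrightarrow> 1 \<le> j \<Longrightarrow> prefix_gcd q j \<le> q 1"
  using prefix_gcd_dvd[of 1 j q] by (simp add: zdvd_imp_le)

context
  fixes q :: "nat \<Rightarrow> int" and k :: nat
  assumes q_pos: "\<And>i. i \<in> {1..k} \<Longrightarrow> q i > 0"
begin

lemma margin_nonneg: "j \<le> k \<Longrightarrow> margin q j \<ge> 0"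
proof (induction j)
  case (Suc j)
  show ?case
  proof (cases "j = 0")
    case False
    then have "prefix_gcd q j > 0" "q (Suc j) > 0" using Suc.prems q_pos prefix_gcd_pos[of q j] by auto
    then have "prefix_gcd q j div gcd (prefix_gcd q j) (q (Suc j)) \<ge> 1" by (simp add: div_gcd_ge_1)
    then show ?thesis using Suc \<open>q (Suc j) > 0\<close> by simp
  qed simp
qed simp

lemma margin_mult_prefix_gcd_le:
  assumes "1 \<le> j" "j \<le> k"
  shows "margin q j * prefix_gcd q j \<le> (\<Sum>i=1..j-1. q i * q (i+1))"
  using assms
proof (induction j rule: nat_induct_at_least)
  case (Suc j)
  define a where "a = prefix_gcd q j"
  define b where "b = q (Suc j)"
  define p where "p = a div gcd a b"
  have "a > 0" "b > 0" using Suc q_pos prefix_gcd_pos[of q j] unfolding a_def b_def by auto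
  have "a \<le> q j" using Suc q_pos prefix_gcd_dvd[of j j q] unfolding a_def by (simp add: zdvd_imp_le)
  have a_eq: "a = p * gcd a b" unfolding p_def by simp
  have "gcd a b \<le> a" using \<open>a > 0\<close> by (simp add: zdvd_imp_le)
  then have "margin q j * gcd a b \<le> margin q j * a"
    using margin_nonneg Suc by (intro mult_left_mono) auto
  moreover have "(p - 1) * b * gcd a b \<le> a * b"
    using \<open>a > 0\<close> \<open>b > 0\<close> by (subst (2) a_eq) (simp add: algebra_simps)
  moreover have "a * b \<le> q j * b" using \<open>a \<le> q j\<close> \<open>b > 0\<close> by simp
  moreover have "(\<Sum>i=1..Suc j - 1. q i * q (i+1)) = (\<Sum>i=1..j-1. q i * q (i+1)) + q j * b"
    using Suc unfolding b_def by (cases j) auto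
  ultimately show ?case using Suc
    by (simp add: prefix_gcd_Suc p_def flip: a_def b_def) (simp add: algebra_simps)
qed simp

context
  fixes Q :: int
  assumes q_le: "\<And>i. i \<in> {1..k} \<Longrightarrow> q i \<le> Q"
begin

lemma margin_le_sum:
  assumes "1 \<le> j" "j \<le> k"
  shows "2 * margin q j + prefix_gcd q j * Q \<le> Q * (\<Sum>i=1..j. q i)"
  using assms
proof (induction j rule: nat_induct_at_least)
  case base
  then show ?case using q_pos[of 1] by (simp add: prefix_gcd_def mult.commute)
next
  case (Suc j)
  define a where "a = prefix_gcd q j"
  define b where "b = q (Suc j)"
  define p where "p = a div gcd a b"
  have "a > 0" "b > 0" "b \<le> Q" using Suc q_pos q_le prefix_gcd_pos[of q j] unfolding a_def b_def by auto
  have "a \<le> Q" using Suc q_pos q_le prefix_gcd_le[of q j] unfolding a_def by fastforce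
  have "p \<ge> 1" "p \<le> a" unfolding p_def using \<open>a > 0\<close> div_gcd_ge_1 div_gcd_le by auto
  have a_eq: "a = p * gcd a b" unfolding p_def by simp
  have "1 * Q \<le> gcd a b * Q"
    using \<open>a > 0\<close> \<open>b \<le> Q\<close> \<open>b > 0\<close> by (intro mult_right_mono) (simp_all add: int_one_le_iff_zero_less)
  then have "b \<le> gcd a b * Q" using \<open>b \<le> Q\<close> by simp
  then have "(p - 1) * b \<le> (p - 1) * gcd a b * Q"
    using \<open>p \<ge> 1\<close> mult_left_mono[of b "gcd a b * Q" "p - 1"] by (simp add: mult.assoc)
  moreover have "(p - 1) * b \<le> Q * b" using \<open>p \<le> a\<close> \<open>a \<le> Q\<close> \<open>b > 0\<close> by simp
  moreover have "(p - 1) * gcd a b * Q + gcd a b * Q = a * Q" by (subst (3) a_eq) (simp add: algebra_simps)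
  ultimately show ?case using Suc
    by (simp add: prefix_gcd_Suc p_def flip: a_def b_def) (simp add: algebra_simps)
qed

lemma representation_in_box:
  fixes L :: "nat \<Rightarrow> int"
  assumes L_ge: "\<And>i. i \<in> {1..k} \<Longrightarrow> L i \<ge> Q"
    and "1 \<le> j" "j \<le> k"
    and "prefix_gcd q j dvd z" "margin q j \<le> z" "z \<le> (\<Sum>i=1..j. L i * q i) - margin q j"
  shows "\<exists>c. (\<forall>i\<in>{1..j}. 0 \<le> c i \<and> c i \<le> L i) \<and> z = (\<Sum>i=1..j. c i * q i)"
  using assms(2-)
proof (induction j arbitrary: z rule: nat_induct_at_least)
  case base
  then have "q 1 > 0" using q_pos by simp
  moreover obtain w where w: "z = q 1 * w" using base by (auto simp: prefix_gcd_def)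
  ultimately have "0 \<le> w" "w \<le> L 1" using base
    by (simp_all add: zero_le_mult_iff mult.commute[of "L 1"])
  then show ?case using w by (intro exI[of _ "\<lambda>_. w"]) (simp add: mult.commute)
next
  case (Suc j)
  define a where "a = prefix_gcd q j"
  define b where "b = q (Suc j)"
  define p where "p = a div gcd a b"
  define T where "T = (\<Sum>i=1..j. L i * q i)"
  have "a > 0" "b > 0" "b \<le> Q" using Suc q_pos q_le prefix_gcd_pos[of q j] unfolding a_def b_def by auto
  have "a \<le> Q" using Suc q_pos q_le prefix_gcd_le[of q j] unfolding a_def by fastforce
  have "p \<le> a" unfolding p_def using \<open>a > 0\<close> div_gcd_le by auto
  have "L (Suc j) \<ge> Q" using L_ge Suc by simp
  have "Q * (\<Sum>i=1..j. q i) \<le> T"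
    unfolding T_def sum_distrib_left using Suc L_ge q_pos
    by (intro sum_mono mult_right_mono) (auto simp: less_imp_le)
  moreover have "p * b \<le> a * Q" using \<open>p \<le> a\<close> \<open>b \<le> Q\<close> \<open>a > 0\<close> \<open>b > 0\<close> by (simp add: mult_mono)
  ultimately have gap: "p * b \<le> T - 2 * margin q j"
    using margin_le_sum[OF \<open>1 \<le> j\<close>] Suc unfolding a_def by fastforce
  have "margin q (Suc j) = margin q j + (p - 1) * b" "prefix_gcd q (Suc j) = gcd a b"
    using Suc by (simp_all add: prefix_gcd_Suc p_def a_def b_def)
  moreover have "(\<Sum>i=1..Suc j. L i * q i) = T + L (Suc j) * b" unfolding T_def b_def by simp
  ultimately have "gcd a b dvd z" "margin q j + (p - 1) * b \<le> z"
      "z \<le> T + L (Suc j) * b - margin q j - (p - 1) * b"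
    using Suc.prems by simp_all
  moreover have "p - 1 \<le> L (Suc j)" using \<open>p \<le> a\<close> \<open>a \<le> Q\<close> \<open>L (Suc j) \<ge> Q\<close> by simp
  ultimately obtain c where c: "0 \<le> c" "c \<le> L (Suc j)" "a dvd z - c * b"
      "margin q j \<le> z - c * b" "z - c * b \<le> T - margin q j"
    using exists_admissible_coefficient[OF \<open>a > 0\<close> \<open>b > 0\<close> _ gap[unfolded p_def]]
    unfolding p_def by blast
  obtain d where d: "\<forall>i\<in>{1..j}. 0 \<le> d i \<and> d i \<le> L i" "z - c * b = (\<Sum>i=1..j. d i * q i)"
    using Suc.IH[of "z - c * b"] Suc.prems c unfolding a_def T_def by auto
  have "(\<Sum>i=1..j. (d(Suc j := c)) i * q i) = (\<Sum>i=1..j. d i * q i)" by (rule sum.cong) auto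
  then have "z = (\<Sum>i=1..Suc j. (d(Suc j := c)) i * q i)"
    using d(2) unfolding b_def by (simp add: algebra_simps)
  moreover have "\<forall>i\<in>{1..Suc j}. 0 \<le> (d(Suc j := c)) i \<and> (d(Suc j := c)) i \<le> L i"
    using d(1) c by auto
  ultimately show ?case by blast
qed

end

end

lemma box_sum_in_gcd_interval:
  assumes "\<And>i. i \<in> {1..k} \<Longrightarrow> q i > 0" and "\<forall>i\<in>{1..k}. C i \<le> a i \<and> a i \<le> D i"
  shows "prefix_gcd q k dvd (\<Sum>i=1..k. a i * q i)"
    and "(\<Sum>i=1..k. C i * q i) \<le> (\<Sum>i=1..k. a i * q i)"
    and "(\<Sum>i=1..k. a i * q i) \<le> (\<Sum>i=1..k. D i * q i)"
proof -
  show "prefix_gcd q k dvd (\<Sum>i=1..k. a i * q i)"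
    by (auto intro!: dvd_sum dvd_mult prefix_gcd_dvd)
  show "(\<Sum>i=1..k. C i * q i) \<le> (\<Sum>i=1..k. a i * q i)"
    using assms by (intro sum_mono mult_right_mono) (auto simp: less_imp_le)
  show "(\<Sum>i=1..k. a i * q i) \<le> (\<Sum>i=1..k. D i * q i)"
    using assms by (intro sum_mono mult_right_mono) (auto simp: less_imp_le)
qed

lemma box_sum_exists:
  assumes "1 \<le> k" and q_pos: "\<And>i. i \<in> {1..k} \<Longrightarrow> q i > 0"
    and CD: "\<And>i. i \<in> {1..k} \<Longrightarrow> D i - C i \<ge> Max (q ` {1..k})"
    and "prefix_gcd q k dvd x"
    and "(\<Sum>i=1..k. C i * q i) + margin q k \<le> x" "x \<le> (\<Sum>i=1..k. D i * q i) - margin q k"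
  shows "\<exists>a. (\<forall>i\<in>{1..k}. C i \<le> a i \<and> a i \<le> D i) \<and> x = (\<Sum>i=1..k. a i * q i)"
proof -
  define z where "z = x - (\<Sum>i=1..k. C i * q i)"
  have "prefix_gcd q k dvd (\<Sum>i=1..k. C i * q i)"
    by (auto intro!: dvd_sum dvd_mult prefix_gcd_dvd)
  then have "prefix_gcd q k dvd z" unfolding z_def using assms(4) by simp
  moreover have "(\<Sum>i=1..k. (D i - C i) * q i) = (\<Sum>i=1..k. D i * q i) - (\<Sum>i=1..k. C i * q i)"
    by (simp add: left_diff_distrib sum_subtractf)
  ultimately obtain b where b: "\<forall>i\<in>{1..k}. 0 \<le> b i \<and> b i \<le> D i - C i" "z = (\<Sum>i=1..k. b i * q i)"
    using representation_in_box[of k q "Max (q ` {1..k})" "\<lambda>i. D i - C i" k z] q_pos CD assms(1,5,6)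
    unfolding z_def by auto
  have "x = (\<Sum>i=1..k. (C i + b i) * q i)"
    using b(2) unfolding z_def by (simp add: distrib_right sum.distrib)
  then show ?thesis using b(1) by (intro exI[of _ "\<lambda>i. C i + b i"]) auto
qed

lemma of_int_divide_le_iff:
  fixes a m r s :: int
  assumes "r > 0"
  shows "real_of_int a / real_of_int r \<le> real_of_int m \<longleftrightarrow> a \<le> m * r"
    and "real_of_int m \<le> real_of_int a / real_of_int r \<longleftrightarrow> m * r \<le> a"
    and "real_of_int a / real_of_int r + real_of_int s / (real_of_int r)^2 \<le> real_of_int m
           \<longleftrightarrow> a * r + s \<le> m * r * r"
    and "real_of_int m \<le> real_of_int a / real_of_int r - real_of_int s / (real_of_int r)^2
           \<longleftrightarrow> m * r * r + s \<le> a * r"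
proof -
  have r: "real_of_int r > 0" using assms by simp
  show "real_of_int a / real_of_int r \<le> real_of_int m \<longleftrightarrow> a \<le> m * r"
    using r by (simp add: pos_divide_le_eq flip: of_int_mult)
  show "real_of_int m \<le> real_of_int a / real_of_int r \<longleftrightarrow> m * r \<le> a"
    using r by (simp add: pos_le_divide_eq flip: of_int_mult)
  have "real_of_int a / real_of_int r + real_of_int s / (real_of_int r)^2
          = real_of_int (a * r + s) / real_of_int (r * r)"
       "real_of_int a / real_of_int r - real_of_int s / (real_of_int r)^2
          = real_of_int (a * r - s) / real_of_int (r * r)"
    using r by (simp_all add: field_simps power2_eq_square)
  moreover have "real_of_int (r * r) > 0" using r by simp
  ultimately show "real_of_int a / real_of_int r + real_of_int s / (real_of_int r)^2 \<le> real_of_int m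
           \<longleftrightarrow> a * r + s \<le> m * r * r"
    and "real_of_int m \<le> real_of_int a / real_of_int r - real_of_int s / (real_of_int r)^2
           \<longleftrightarrow> m * r * r + s \<le> a * r"
    by (auto simp: pos_divide_le_eq pos_le_divide_eq mult.assoc simp flip: of_int_mult of_int_add of_int_diff)
qed

theorem lemma4p1:
  fixes k :: nat and q C D :: "nat \<Rightarrow> int"
  assumes "k \<ge> 2"
    and "\<And>i. i \<in> {1..k} \<Longrightarrow> q i > 0"
    and "\<And>i. i \<in> {1..k} \<Longrightarrow> D i - C i \<ge> Max (q ` {1..k})"
  defines "r \<equiv> Gcd (q ` {1..k})"
    and "A \<equiv> {(\<Sum>i=1..k. a i * q i) | a :: nat \<Rightarrow> int. \<forall>i\<in>{1..k}. C i \<le> a i \<and> a i \<le> D i}"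
    and "CC \<equiv> (\<Sum>i=1..k. C i * q i)"
    and "DD \<equiv> (\<Sum>i=1..k. D i * q i)"
    and "S \<equiv> (\<Sum>i=1..k-1. q i * q (i+1))"
  shows "(A \<subseteq> {m * r | m :: int. real_of_int CC / real_of_int r \<le> real_of_int m
                                   \<and> real_of_int m \<le> real_of_int DD / real_of_int r}) \<and>
         ({m * r | m :: int. real_of_int CC / real_of_int r + real_of_int S / (real_of_int r)^2 \<le> real_of_int m
                          \<and> real_of_int m \<le> real_of_int DD / real_of_int r - real_of_int S / (real_of_int r)^2} \<subseteq> A)"
    (is "A \<subseteq> ?outer \<and> ?inner \<subseteq> A")
proof -
  have "1 \<le> k" using assms(1) by simp
  have r_eq: "r = prefix_gcd q k" unfolding r_def prefix_gcd_def ..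
  have r_pos: "r > 0" using prefix_gcd_pos[of q k] assms(2) \<open>1 \<le> k\<close> unfolding r_eq by simp
  have "A \<subseteq> ?outer"
  proof
    fix x assume "x \<in> A"
    then obtain a where a: "\<forall>i\<in>{1..k}. C i \<le> a i \<and> a i \<le> D i" "x = (\<Sum>i=1..k. a i * q i)"
      unfolding A_def by blast
    have x: "r dvd x" "CC \<le> x" "x \<le> DD"
      using box_sum_in_gcd_interval[OF assms(2) a(1)] unfolding a(2) CC_def DD_def r_eq by simp_all
    then obtain m where "x = m * r" by (metis dvd_def mult.commute)
    with x have "x = m * r" "real_of_int CC / real_of_int r \<le> real_of_int m"
      "real_of_int m \<le> real_of_int DD / real_of_int r"
      using of_int_divide_le_iff(1,2)[OF r_pos] by simp_all
    then show "x \<in> ?outer" by blast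
  qed
  moreover have "?inner \<subseteq> A"
  proof
    fix x assume "x \<in> ?inner"
    then obtain m where "x = m * r"
      "real_of_int CC / real_of_int r + real_of_int S / (real_of_int r)^2 \<le> real_of_int m"
      "real_of_int m \<le> real_of_int DD / real_of_int r - real_of_int S / (real_of_int r)^2"
      by blast
    then have x: "x = m * r" "CC * r + S \<le> m * r * r" "m * r * r + S \<le> DD * r"
      using of_int_divide_le_iff(3,4)[OF r_pos] by simp_all
    have "margin q k * r \<le> S"
      using margin_mult_prefix_gcd_le[OF assms(2) \<open>1 \<le> k\<close> order_refl] unfolding r_eq S_def .
    then have "(CC + margin q k) * r \<le> x * r" "(x + margin q k) * r \<le> DD * r"
      using x by (simp_all add: algebra_simps)
    then have "CC + margin q k \<le> x" "x \<le> DD - margin q k" using r_pos by simp_all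
    moreover have "prefix_gcd q k dvd x" using x(1) unfolding r_eq by simp
    ultimately obtain a where "\<forall>i\<in>{1..k}. C i \<le> a i \<and> a i \<le> D i" "x = (\<Sum>i=1..k. a i * q i)"
      using box_sum_exists[where C = C and D = D, OF \<open>1 \<le> k\<close> assms(2,3)] unfolding CC_def DD_def by blast
    then show "x \<in> A" unfolding A_def by blast
  qed
  ultimately show ?thesis by blast
qed

end
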